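(* Let $B$ be a log-product expression of degree $n\geq 2$. Then there are homogeneous expressions $X$ and $Y$ such that $B\equiv X\cdot Y$ and $n/3 \leq \deg X \le 2n/3$ and $n/3\le \deg Y \leq 2n/3$.
   Context: Regular expressions (without star, without $\emptyset$) are built from $\epsilon$ and letters by union and concatenation; $R\equiv R'$ means they describe the same language. A homogeneous expression describes a language all of whose words have the same length, its degree $\deg R$. A homogeneous expression $B$ is log-product if it is a letter, or there are homogeneous expressions $B_1,B_2$ with $B_1$ log-product, $\deg B_1\ge\deg B_2$ and $B=B_1B_2$ or $B=B_2B_1$. *)

theory Defs
  imports Complex_Main
begin

datatype 'a sfre = Eps | Lit 'a | Plus "'a sfre" "'a sfre" | Times "'a sfre" "'a sfre"

fun lang :: "'a sfre \<Rightarrow> 'a list set" where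
  "lang Eps = {[]}"
| "lang (Lit a) = {[a]}"
| "lang (Plus r s) = lang r \<union> lang s"
| "lang (Times r s) = {u @ v | u v. u \<in> lang r \<and> v \<in> lang s}"

definition req :: "'a sfre \<Rightarrow> 'a sfre \<Rightarrow> bool" (infix "\<equiv>\<^sub>r" 50) where
  "r \<equiv>\<^sub>r s \<longleftrightarrow> lang r = lang s"

definition homogeneous :: "'a sfre \<Rightarrow> bool" where
  "homogeneous r \<longleftrightarrow> (\<exists>n. \<forall>w \<in> lang r. length w = n)"

text \<open>Degree: the common length of the words (languages are never empty).\<close>
definition deg :: "'a sfre \<Rightarrow> nat" where
  "deg r = length (SOME w. w \<in> lang r)"

inductive log_product :: "'a sfre \<Rightarrow> bool" where
  lp_lit: "log_product (Lit a)"
| lp_left: "\<lbrakk>log_product B1; homogeneous B2; deg B1 \<ge> deg B2\<rbrakk> \<Longrightarrow> log_product (Times B1 B2)"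
| lp_right: "\<lbrakk>log_product B1; homogeneous B2; deg B1 \<ge> deg B2\<rbrakk> \<Longrightarrow> log_product (Times B2 B1)"

end

theory Submission
  imports Defs
begin

text \<open>A log-product expression is a tree of concatenations in which every node has a log-product
  factor at least as long as its sibling. Descend this tree from \<open>B\<close>, keeping the invariant that
  the current subexpression \<open>C\<close>, which starts at position \<open>l\<close> of \<open>B\<close>, strictly covers the middle
  third \<open>(n/3, 2n/3)\<close> of \<open>B\<close>. At a node \<open>C = C\<^sub>1C\<^sub>2\<close> or \<open>C = C\<^sub>2C\<^sub>1\<close> with \<open>C\<^sub>1\<close> log-product, either
  the cut between the two factors lies in \<open>[n/3, 2n/3]\<close>, which splits \<open>B\<close> as required, or the
  longer factor \<open>C\<^sub>1\<close> alone still covers the middle third and we descend into it: as \<open>C\<^sub>1\<close> is at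
  least half of \<open>C\<close>, the cut can only miss the middle third on the side of \<open>C\<^sub>1\<close>. A single letter
  cannot cover the middle third once \<open>n \<ge> 2\<close>, so the descent ends at a cut.\<close>

lemma lang_nonempty: "lang r \<noteq> {}"
  by (induction r) auto

lemma length_eq_deg: "homogeneous r \<Longrightarrow> w \<in> lang r \<Longrightarrow> length w = deg r"
  unfolding homogeneous_def deg_def by (metis lang_nonempty some_in_eq)

lemma deg_Lit [simp]: "deg (Lit a) = 1"
  by (simp add: deg_def)

lemma deg_req: "r \<equiv>\<^sub>r s \<Longrightarrow> deg r = deg s"
  by (simp add: req_def deg_def)

lemma homogeneous_Times: "homogeneous r \<Longrightarrow> homogeneous s \<Longrightarrow> homogeneous (Times r s)"
  unfolding homogeneous_def by fastforce

lemma deg_Times: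
  assumes "homogeneous r" "homogeneous s"
  shows "deg (Times r s) = deg r + deg s"
proof -
  obtain u v where uv: "u \<in> lang r" "v \<in> lang s"
    using lang_nonempty by blast
  then have "u @ v \<in> lang (Times r s)"
    by auto
  then have "length (u @ v) = deg (Times r s)"
    using assms homogeneous_Times length_eq_deg by blast
  moreover have "length u = deg r" "length v = deg s"
    using uv assms length_eq_deg by blast+
  ultimately show ?thesis
    by simp
qed

lemma log_product_homogeneous: "log_product B \<Longrightarrow> homogeneous B"
  by (induction rule: log_product.induct) (auto simp: homogeneous_Times homogeneous_def)

lemma req_refl: "r \<equiv>\<^sub>r r"
  by (simp add: req_def)

lemma req_trans [trans]: "r \<equiv>\<^sub>r s \<Longrightarrow> s \<equiv>\<^sub>r t \<Longrightarrow> r \<equiv>\<^sub>r t"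
  by (simp add: req_def)

lemma req_sym: "r \<equiv>\<^sub>r s \<Longrightarrow> s \<equiv>\<^sub>r r"
  by (simp add: req_def)

lemma req_Times_cong: "r \<equiv>\<^sub>r r' \<Longrightarrow> s \<equiv>\<^sub>r s' \<Longrightarrow> Times r s \<equiv>\<^sub>r Times r' s'"
  by (simp add: req_def)

lemma req_Times_assoc: "Times (Times r s) t \<equiv>\<^sub>r Times r (Times s t)"
  unfolding req_def
proof (intro set_eqI iffI)
  fix w assume "w \<in> lang (Times (Times r s) t)"
  then obtain u v x where "w = u @ (v @ x)" "u \<in> lang r" "v \<in> lang s" "x \<in> lang t"
    by auto
  moreover from this have "v @ x \<in> lang (Times s t)" by auto
  ultimately show "w \<in> lang (Times r (Times s t))" unfolding lang.simps(4) by blast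
next
  fix w assume "w \<in> lang (Times r (Times s t))"
  then obtain u v x where "w = (u @ v) @ x" "u \<in> lang r" "v \<in> lang s" "x \<in> lang t"
    by auto
  moreover from this have "u @ v \<in> lang (Times r s)" by auto
  ultimately show "w \<in> lang (Times (Times r s) t)" unfolding lang.simps(4) by blast
qed

lemma log_product_cut_in_middle_third:
  assumes "log_product C" "3 * l < n" "2 * n < 3 * (l + deg C)" "l + deg C \<le> n" "2 \<le> n"
  shows "\<exists>X Y. homogeneous X \<and> homogeneous Y \<and> C \<equiv>\<^sub>r Times X Y \<and>
           n \<le> 3 * (l + deg X) \<and> 3 * (l + deg X) \<le> 2 * n"
  using assms(1-4)
proof (induction arbitrary: l rule: log_product.induct)
  case (lp_lit a)
  then show ?case
    using \<open>2 \<le> n\<close> by simp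
next
  case (lp_left C1 C2)
  have "homogeneous C1"
    using lp_left.hyps(1) log_product_homogeneous by blast
  then have deg_C: "deg (Times C1 C2) = deg C1 + deg C2"
    using lp_left.hyps(2) deg_Times by blast
  show ?case
  proof (cases "2 * n < 3 * (l + deg C1)")
    case True
    moreover have "l + deg C1 \<le> n"
      using lp_left.prems(3) deg_C by simp
    ultimately obtain X Y where XY: "homogeneous X" "homogeneous Y" "C1 \<equiv>\<^sub>r Times X Y"
        "n \<le> 3 * (l + deg X)" "3 * (l + deg X) \<le> 2 * n"
      using lp_left.IH lp_left.prems(1) by blast
    have "Times C1 C2 \<equiv>\<^sub>r Times (Times X Y) C2"
      using XY(3) req_Times_cong req_refl by blast
    also have "\<dots> \<equiv>\<^sub>r Times X (Times Y C2)"
      by (rule req_Times_assoc)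
    finally have "Times C1 C2 \<equiv>\<^sub>r Times X (Times Y C2)" .
    moreover have "homogeneous (Times Y C2)"
      using XY(2) lp_left.hyps(2) homogeneous_Times by blast
    ultimately show ?thesis
      using XY(1,4,5) by blast
  next
    case False
    then have "n \<le> 3 * (l + deg C1)" "3 * (l + deg C1) \<le> 2 * n"
      using lp_left.prems(2) lp_left.hyps(3) deg_C
      unfolding distrib_left by linarith+
    then show ?thesis
      using lp_left.hyps(2) \<open>homogeneous C1\<close> req_refl by blast
  qed
next
  case (lp_right C1 C2)
  have "homogeneous C1"
    using lp_right.hyps(1) log_product_homogeneous by blast
  then have deg_C: "deg (Times C2 C1) = deg C2 + deg C1"
    using lp_right.hyps(2) deg_Times by blast
  show ?case
  proof (cases "3 * (l + deg C2) < n")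
    case True
    moreover have "2 * n < 3 * (l + deg C2 + deg C1)" "l + deg C2 + deg C1 \<le> n"
      using lp_right.prems(2,3) deg_C by simp_all
    ultimately obtain X Y where XY: "homogeneous X" "homogeneous Y" "C1 \<equiv>\<^sub>r Times X Y"
        "n \<le> 3 * (l + deg C2 + deg X)" "3 * (l + deg C2 + deg X) \<le> 2 * n"
      using lp_right.IH by blast
    have "Times C2 C1 \<equiv>\<^sub>r Times C2 (Times X Y)"
      using XY(3) req_Times_cong req_refl by blast
    also have "\<dots> \<equiv>\<^sub>r Times (Times C2 X) Y"
      by (rule req_sym, rule req_Times_assoc)
    finally have "Times C2 C1 \<equiv>\<^sub>r Times (Times C2 X) Y" .
    moreover have "homogeneous (Times C2 X)" "deg (Times C2 X) = deg C2 + deg X"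
      using XY(1) lp_right.hyps(2) homogeneous_Times deg_Times by auto
    ultimately show ?thesis
      using XY(2,4,5) by (metis add.assoc)
  next
    case False
    then have "n \<le> 3 * (l + deg C2)" "3 * (l + deg C2) \<le> 2 * n"
      using lp_right.prems(1,3) lp_right.hyps(3) deg_C
      unfolding distrib_left by linarith+
    then show ?thesis
      using lp_right.hyps(2) \<open>homogeneous C1\<close> req_refl by blast
  qed
qed

theorem proposition6p8:
  fixes B :: "'a sfre"
  assumes "log_product B" and "deg B \<ge> 2"
  shows "\<exists>X Y. homogeneous X \<and> homogeneous Y \<and> B \<equiv>\<^sub>r Times X Y \<and>
           real (deg B) / 3 \<le> real (deg X) \<and> real (deg X) \<le> 2 * real (deg B) / 3 \<and>
           real (deg B) / 3 \<le> real (deg Y) \<and> real (deg Y) \<le> 2 * real (deg B) / 3"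
proof -
  obtain X Y where XY: "homogeneous X" "homogeneous Y" "B \<equiv>\<^sub>r Times X Y"
      "deg B \<le> 3 * deg X" "3 * deg X \<le> 2 * deg B"
    using log_product_cut_in_middle_third[of B 0 "deg B"] assms by auto
  have "deg B = deg X + deg Y"
    using deg_req[OF XY(3)] deg_Times[OF XY(1,2)] by simp
  then have "real (deg B) / 3 \<le> real (deg X)" "real (deg X) \<le> 2 * real (deg B) / 3"
      "real (deg B) / 3 \<le> real (deg Y)" "real (deg Y) \<le> 2 * real (deg B) / 3"
    using XY(4,5) by linarith+
  with XY(1-3) show ?thesis
    by blast
qed

end
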